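(* Let $\theta,w\in\mathbb{R}^p$ and $\eta=\theta+w$, and for $c\in\mathbb{R}$ let $\eta(c)=\bar\eta+c(\eta-\bar\eta)$. Assume $\mathrm{var}(\eta)>0$, $\bar\theta\neq0$ and $\bar\eta\neq0$. Then the minimizer over $c\in\mathbb{R}$ of $\mathrm{MSE}(\eta(c),\theta)$ is $$c^{\mathrm{MSE}}=\frac{\mathrm{cov}(\theta,\eta)}{\mathrm{var}(\eta)},$$ and the minimizer over $c\in\mathbb{R}$ of $\mathrm{SPH}(\eta(c),\theta)$ is $$c^{\mathrm{SPH}}=\frac{\bar\eta}{\bar\theta}\,c^{\mathrm{MSE}}.$$
   Context: For $u,v\in\mathbb{R}^p$: $\bar u=\frac1p\sum_i u_i$, $\mathrm{var}(u)=\frac1p\sum_i(u_i-\bar u)^2$, $\mathrm{cov}(u,v)=\frac1p\sum_i(u_i-\bar u)(v_i-\bar v)$; for $x\in\mathbb{R}$, $u-x$ and $x+u$ are componentwise. $\mathrm{MSE}(u,\theta)=\langle u-\theta,u-\theta\rangle/p$, and for nonzero $u,\theta$, $\mathrm{SPH}(u,\theta)=1-\left(\frac{\langle u,\theta\rangle}{|u||\theta|}\right)^2$. *)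

theory Defs
  imports "HOL-Analysis.Analysis"
begin

definition vmean :: "real^'n \<Rightarrow> real" where
  "vmean u = (\<Sum>i\<in>UNIV. u $ i) / real CARD('n)"

definition vvar :: "real^'n \<Rightarrow> real" where
  "vvar u = (\<Sum>i\<in>UNIV. (u $ i - vmean u)\<^sup>2) / real CARD('n)"

definition vcov :: "real^'n \<Rightarrow> real^'n \<Rightarrow> real" where
  "vcov u v = (\<Sum>i\<in>UNIV. (u $ i - vmean u) * (v $ i - vmean v)) / real CARD('n)"

definition MSE :: "real^'n \<Rightarrow> real^'n \<Rightarrow> real" where
  "MSE u \<theta> = inner (u - \<theta>) (u - \<theta>) / real CARD('n)"

definition SPH :: "real^'n \<Rightarrow> real^'n \<Rightarrow> real" where
  "SPH u \<theta> = 1 - (inner u \<theta> / (norm u * norm \<theta>))\<^sup>2"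

definition shrink :: "real^'n \<Rightarrow> real \<Rightarrow> real^'n" where
  "shrink \<eta> c = (\<chi> i. vmean \<eta> + c * (\<eta> $ i - vmean \<eta>))"

end

theory Submission
  imports Defs
begin

text \<open>
  Write \<open>m = mean \<eta>\<close>, \<open>t = mean \<theta>\<close>, \<open>V = var \<eta>\<close>, \<open>C = cov \<theta> \<eta>\<close>. Shrinking keeps the mean
  and scales the centred part, so, with \<open>p = CARD('n)\<close>, \<open>\<langle>\<eta>(c), \<theta>\<rangle> = p (m t + c C)\<close> and
  \<open>|\<eta>(c)|\<^sup>2 = p (m\<^sup>2 + c\<^sup>2 V)\<close>. Hence the MSE is a quadratic in \<open>c\<close> with leading
  coefficient \<open>V\<close>, and \<open>1 - SPH\<close> is \<open>(m t + c C)\<^sup>2 / (m\<^sup>2 + c\<^sup>2 V)\<close> up to a positive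
  factor. By Lagrange's identity
  \<open>(m\<^sup>2 + c\<^sup>2 V) (t\<^sup>2 V + C\<^sup>2) - V (m t + c C)\<^sup>2 = (m C - c V t)\<^sup>2\<close>
  (Cauchy-Schwarz for \<open>(m, c \<surd>V)\<close> and \<open>(t, C / \<surd>V)\<close>) this ratio is maximal exactly at
  \<open>c = (m / t) (C / V)\<close>. In both cases the excess over the optimum is a positive weight
  times \<open>(c - c\<^sub>o\<^sub>p\<^sub>t)\<^sup>2\<close>, which gives existence and uniqueness of the minimiser at once.
\<close>

lemma sum_eq_card_vmean: "(\<Sum>i\<in>UNIV. u $ i) = real CARD('n) * vmean (u :: real^'n)"
  by (simp add: vmean_def)

lemma sum_minus_vmean_eq_0: "(\<Sum>i\<in>UNIV. u $ i - vmean (u :: real^'n)) = 0"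
  by (simp add: sum_subtractf sum_eq_card_vmean)

lemma vvar_eq_vcov_self: "vvar u = vcov u u"
  by (simp add: vvar_def vcov_def power2_eq_square)

lemma vcov_commute: "vcov u v = vcov v u"
  by (simp add: vcov_def mult.commute)

lemma inner_eq_vmean_vcov:
  fixes u v :: "real^'n"
  shows "inner u v = real CARD('n) * (vmean u * vmean v + vcov u v)"
proof -
  have centred: "(\<Sum>i\<in>UNIV. vmean v * (u $ i - vmean u)) = 0"
    by (simp only: sum_distrib_left[symmetric] sum_minus_vmean_eq_0 mult_zero_right)
  have "real CARD('n) * vcov u v = (\<Sum>i\<in>UNIV. (u $ i - vmean u) * v $ i - vmean v * (u $ i - vmean u))"
    by (simp add: vcov_def algebra_simps)
  also have "\<dots> = (\<Sum>i\<in>UNIV. u $ i * v $ i) - vmean u * (\<Sum>i\<in>UNIV. v $ i)"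
    by (simp only: sum_subtractf centred diff_zero left_diff_distrib sum_distrib_left)
  also have "\<dots> = inner u v - real CARD('n) * vmean u * vmean v"
    by (simp only: inner_vec_def inner_real_def sum_eq_card_vmean ac_simps)
  finally show ?thesis
    by (simp add: algebra_simps)
qed

lemma vmean_shrink: "vmean (shrink \<eta> c) = vmean \<eta>"
proof -
  have "(\<Sum>i\<in>UNIV. shrink \<eta> c $ i) = real CARD('a) * vmean \<eta> + c * (\<Sum>i\<in>UNIV. \<eta> $ i - vmean \<eta>)"
    by (simp add: shrink_def sum.distrib sum_distrib_left)
  then show ?thesis
    by (simp add: sum_minus_vmean_eq_0 vmean_def[of "shrink \<eta> c"])
qed

lemma vcov_shrink_left: "vcov (shrink \<eta> c) v = c * vcov \<eta> v"
  unfolding vcov_def vmean_shrink by (simp add: shrink_def sum_distrib_left mult.assoc)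

lemma inner_shrink:
  fixes \<eta> \<theta> :: "real^'n"
  shows "inner (shrink \<eta> c) \<theta> = real CARD('n) * (vmean \<eta> * vmean \<theta> + c * vcov \<theta> \<eta>)"
  by (simp add: inner_eq_vmean_vcov vmean_shrink vcov_shrink_left vcov_commute[of \<eta> \<theta>])

lemma inner_shrink_self:
  fixes \<eta> :: "real^'n"
  shows "inner (shrink \<eta> c) (shrink \<eta> c) = real CARD('n) * ((vmean \<eta>)\<^sup>2 + c\<^sup>2 * vvar \<eta>)"
  by (simp add: inner_shrink vmean_shrink vcov_shrink_left vvar_eq_vcov_self power2_eq_square)

lemma MSE_shrink:
  fixes \<eta> \<theta> :: "real^'n"
  shows "MSE (shrink \<eta> c) \<theta> = (vmean \<eta>)\<^sup>2 + c\<^sup>2 * vvar \<eta> - 2 * (vmean \<eta> * vmean \<theta> + c * vcov \<theta> \<eta>)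
    + inner \<theta> \<theta> / real CARD('n)"
proof -
  have "inner (shrink \<eta> c - \<theta>) (shrink \<eta> c - \<theta>)
      = inner (shrink \<eta> c) (shrink \<eta> c) - 2 * inner (shrink \<eta> c) \<theta> + inner \<theta> \<theta>"
    by (simp add: inner_diff_left inner_diff_right inner_commute)
  also have "\<dots> = real CARD('n) * ((vmean \<eta>)\<^sup>2 + c\<^sup>2 * vvar \<eta>)
      - 2 * (real CARD('n) * (vmean \<eta> * vmean \<theta> + c * vcov \<theta> \<eta>)) + inner \<theta> \<theta>"
    unfolding inner_shrink_self unfolding inner_shrink by (rule refl)
  finally show ?thesis
    by (simp add: MSE_def field_simps)
qed

lemma SPH_shrink:
  fixes \<eta> \<theta> :: "real^'n"
  shows "SPH (shrink \<eta> c) \<theta> = 1 - (vmean \<eta> * vmean \<theta> + c * vcov \<theta> \<eta>)\<^sup>2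
    / (((vmean \<eta>)\<^sup>2 + c\<^sup>2 * vvar \<eta>) * (inner \<theta> \<theta> / real CARD('n)))"
proof -
  have "(inner (shrink \<eta> c) \<theta> / (norm (shrink \<eta> c) * norm \<theta>))\<^sup>2
      = (inner (shrink \<eta> c) \<theta>)\<^sup>2 / (inner (shrink \<eta> c) (shrink \<eta> c) * inner \<theta> \<theta>)"
    by (simp add: power_divide power_mult_distrib power2_norm_eq_inner)
  also have "\<dots> = (real CARD('n) * (vmean \<eta> * vmean \<theta> + c * vcov \<theta> \<eta>))\<^sup>2
      / (real CARD('n) * ((vmean \<eta>)\<^sup>2 + c\<^sup>2 * vvar \<eta>) * inner \<theta> \<theta>)"
    unfolding inner_shrink_self unfolding inner_shrink by (rule refl)
  finally show ?thesis
    by (simp add: SPH_def power_mult_distrib power2_eq_square)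
qed

lemma MSE_shrink_excess:
  fixes \<eta> \<theta> :: "real^'n"
  assumes "vvar \<eta> > 0"
  shows "MSE (shrink \<eta> c) \<theta>
    = MSE (shrink \<eta> (vcov \<theta> \<eta> / vvar \<eta>)) \<theta> + vvar \<eta> * (c - vcov \<theta> \<eta> / vvar \<eta>)\<^sup>2"
  using assms by (simp add: MSE_shrink power2_eq_square field_simps)

lemma square_ratio_eq_max_minus_excess:
  fixes m t C V c :: real
  assumes "V > 0" and "m \<noteq> 0" and "t \<noteq> 0"
  shows "(m * t + c * C)\<^sup>2 / (m\<^sup>2 + c\<^sup>2 * V)
    = t\<^sup>2 + C\<^sup>2 / V - V * t\<^sup>2 / (m\<^sup>2 + c\<^sup>2 * V) * (c - m / t * (C / V))\<^sup>2"
proof -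
  define D where "D = m\<^sup>2 + c\<^sup>2 * V"
  define E where "E = (m * C - c * V * t)\<^sup>2"
  have "D > 0"
    using assms by (simp add: D_def add_pos_nonneg)
  have lagrange: "V * (m * t + c * C)\<^sup>2 = D * (t\<^sup>2 * V + C\<^sup>2) - E"
    by (simp add: D_def E_def power2_eq_square algebra_simps)
  have E_eq: "E = V\<^sup>2 * t\<^sup>2 * (c - m / t * (C / V))\<^sup>2"
    using assms by (simp add: E_def power2_eq_square field_simps)
  have "(m * t + c * C)\<^sup>2 / D = (D * (t\<^sup>2 * V + C\<^sup>2) - E) / (V * D)"
    using assms by (simp flip: lagrange)
  also have "\<dots> = (t\<^sup>2 * V + C\<^sup>2) / V - E / (V * D)"
    using \<open>D > 0\<close> by (simp add: diff_divide_distrib)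
  also have "\<dots> = t\<^sup>2 + C\<^sup>2 / V - V * t\<^sup>2 / D * (c - m / t * (C / V))\<^sup>2"
    using assms \<open>D > 0\<close> by (simp add: E_eq add_divide_distrib power2_eq_square)
  finally show ?thesis
    by (simp add: D_def)
qed

lemma inner_self_pos_of_vmean_nonzero:
  fixes \<theta> :: "real^'n"
  assumes "vmean \<theta> \<noteq> 0"
  shows "inner \<theta> \<theta> > 0"
  using assms by (auto simp: vmean_def)

lemma SPH_shrink_excess:
  fixes \<eta> \<theta> :: "real^'n"
  assumes "vvar \<eta> > 0" and "vmean \<theta> \<noteq> 0" and "vmean \<eta> \<noteq> 0"
  shows "SPH (shrink \<eta> c) \<theta>
    = SPH (shrink \<eta> (vmean \<eta> / vmean \<theta> * (vcov \<theta> \<eta> / vvar \<eta>))) \<theta>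
      + vvar \<eta> * (vmean \<theta>)\<^sup>2 / (((vmean \<eta>)\<^sup>2 + c\<^sup>2 * vvar \<eta>) * (inner \<theta> \<theta> / real CARD('n)))
        * (c - vmean \<eta> / vmean \<theta> * (vcov \<theta> \<eta> / vvar \<eta>))\<^sup>2"
proof -
  have SPH_ratio: "SPH (shrink \<eta> x) \<theta> = 1 - (vmean \<eta> * vmean \<theta> + x * vcov \<theta> \<eta>)\<^sup>2
      / ((vmean \<eta>)\<^sup>2 + x\<^sup>2 * vvar \<eta>) / (inner \<theta> \<theta> / real CARD('n))" for x
    by (simp add: SPH_shrink divide_divide_eq_left)
  \<comment> \<open>the excess term vanishes at the optimum, where it reads \<open>W' * (y - y)\<^sup>2\<close>\<close>
  have shift: "1 - (M - W / D * x) / T = (1 - (M - W' * (y - y)\<^sup>2) / T) + W / (D * T) * x"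
    for M W W' D T x y :: real
    by (simp add: diff_divide_distrib)
  show ?thesis
    unfolding SPH_ratio square_ratio_eq_max_minus_excess[OF assms(1,3,2)] by (rule shift)
qed

lemma unique_argmin_of_weighted_square_excess:
  fixes f w :: "real \<Rightarrow> real"
  assumes excess: "\<And>c. f c = f c\<^sub>0 + w c * (c - c\<^sub>0)\<^sup>2" and pos: "\<And>c. w c > 0"
  shows "(\<forall>c. f c\<^sub>0 \<le> f c) \<and> (\<forall>c. (\<forall>c'. f c \<le> f c') \<longrightarrow> c = c\<^sub>0)"
proof (intro conjI allI impI)
  fix c
  show "f c\<^sub>0 \<le> f c"
    using excess[of c] pos[of c] by simp
  assume "\<forall>c'. f c \<le> f c'"
  then have "f c \<le> f c\<^sub>0" ..
  then have "w c * (c - c\<^sub>0)\<^sup>2 \<le> 0"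
    using excess[of c] by linarith
  then show "c = c\<^sub>0"
    using pos[of c] by (simp add: mult_le_0_iff)
qed

theorem lemma1:
  fixes \<theta> w :: "real^'n"
  defines "\<eta> \<equiv> \<theta> + w"
  assumes "vvar \<eta> > 0" and "vmean \<theta> \<noteq> 0" and "vmean \<eta> \<noteq> 0"
  shows "(\<forall>c. MSE (shrink \<eta> (vcov \<theta> \<eta> / vvar \<eta>)) \<theta> \<le> MSE (shrink \<eta> c) \<theta>)
       \<and> (\<forall>c. (\<forall>c'. MSE (shrink \<eta> c) \<theta> \<le> MSE (shrink \<eta> c') \<theta>) \<longrightarrow> c = vcov \<theta> \<eta> / vvar \<eta>)
       \<and> (\<forall>c. SPH (shrink \<eta> (vmean \<eta> / vmean \<theta> * (vcov \<theta> \<eta> / vvar \<eta>))) \<theta> \<le> SPH (shrink \<eta> c) \<theta>)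
       \<and> (\<forall>c. (\<forall>c'. SPH (shrink \<eta> c) \<theta> \<le> SPH (shrink \<eta> c') \<theta>)
              \<longrightarrow> c = vmean \<eta> / vmean \<theta> * (vcov \<theta> \<eta> / vvar \<eta>))"
proof -
  have SPH_weight_pos: "vvar \<eta> * (vmean \<theta>)\<^sup>2
      / (((vmean \<eta>)\<^sup>2 + c\<^sup>2 * vvar \<eta>) * (inner \<theta> \<theta> / real CARD('n))) > 0" for c
    using assms(2-4) inner_self_pos_of_vmean_nonzero[OF assms(3)]
    by (intro divide_pos_pos mult_pos_pos add_pos_nonneg) auto
  have "(\<forall>c. MSE (shrink \<eta> (vcov \<theta> \<eta> / vvar \<eta>)) \<theta> \<le> MSE (shrink \<eta> c) \<theta>)
      \<and> (\<forall>c. (\<forall>c'. MSE (shrink \<eta> c) \<theta> \<le> MSE (shrink \<eta> c') \<theta>) \<longrightarrow> c = vcov \<theta> \<eta> / vvar \<eta>)"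
    by (rule unique_argmin_of_weighted_square_excess[OF MSE_shrink_excess[OF assms(2)] assms(2)])
  moreover have "(\<forall>c. SPH (shrink \<eta> (vmean \<eta> / vmean \<theta> * (vcov \<theta> \<eta> / vvar \<eta>))) \<theta> \<le> SPH (shrink \<eta> c) \<theta>)
      \<and> (\<forall>c. (\<forall>c'. SPH (shrink \<eta> c) \<theta> \<le> SPH (shrink \<eta> c') \<theta>)
              \<longrightarrow> c = vmean \<eta> / vmean \<theta> * (vcov \<theta> \<eta> / vvar \<eta>))"
    by (rule unique_argmin_of_weighted_square_excess[OF SPH_shrink_excess[OF assms(2-4)] SPH_weight_pos])
  ultimately show ?thesis
    by blast
qed

end
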